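(* Let $\mathcal{G}=(V,D,B)$ be a mixed graph, and let $C_1,\dots,C_l$ be the vertex sets of the connected components of its bidirected part $\mathcal{G}_\leftrightarrow=(V,\emptyset,B)$. Then $\tau(\mathcal{G})\le\max_{j=1,\dots,l}|\mathrm{Pa}(C_j)|$; that is, if $n\ge\max_j|\mathrm{Pa}(C_j)|$ then $\hat\ell(\mathcal{G}\mid S_{0,n})<\infty$ almost surely.
   Context: A mixed graph is a triple $\mathcal{G}=(V,D,B)$ with $V=\{1,\dots,p\}$, $D\subseteq V\times V$ directed edges $i\to j$ (no self-loops), and $B$ a set of 2-element subsets of $V$ (bidirected edges). $\mathrm{pa}(j)=\{k: k\to j\in D\}$ and $\mathrm{Pa}(A)=A\cup\bigcup_{i\in A}\mathrm{pa}(i)$. $\mathbb{R}^D_{\mathrm{reg}}$ is the set of real $p\times p$ matrices $\Lambda$ with $\lambda_{ij}=0$ whenever $i\to j\notin D$ and $I-\Lambda$ invertible; $PD(B)$ is the set of positive definite $\Omega$ with $\omega_{ij}=0$ for $i\neq j$, $\{i,j\}\notin B$; $PD(\mathcal{G})=\{(I-\Lambda)^{-T}\Omega(I-\Lambda)^{-1}:\Lambda\in\mathbb{R}^D_{\mathrm{reg}},\Omega\in PD(B)\}$. For an i.i.d. sample $X^{(1)},\dots,X^{(n)}$ from an absolutely continuous distribution on $\mathbb{R}^p$, $S_{0,n}=\frac1n\sum_s X^{(s)}(X^{(s)})^T$; $\ell(\Sigma\mid S)=-\log\det\Sigma-\mathrm{trace}(\Sigma^{-1}S)$; $\hat\ell(\mathcal{G}\mid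 S)=\sup_{\Sigma\in PD(\mathcal{G})}\ell(\Sigma\mid S)$; $\tau(\mathcal{G})=\min\{N\in\mathbb{N}:\hat\ell(\mathcal{G}\mid S_{0,n})<\infty\text{ a.s. for all }n\ge N\}$. *)

theory Defs
  imports "HOL-Analysis.Analysis" "HOL-Probability.Probability"
begin

text \<open>Vertices V = {1..p} are modelled by a finite type 'n (p = CARD('n)).
  Directed edges D :: ('n \<times> 'n) set, (i,j) \<in> D meaning i \<rightarrow> j;
  bidirected edges B :: 'n set set (2-element subsets).\<close>

definition pa :: "('n \<times> 'n) set \<Rightarrow> 'n \<Rightarrow> 'n set" where
  "pa D j = {k. (k, j) \<in> D}"

definition Pa :: "('n \<times> 'n) set \<Rightarrow> 'n set \<Rightarrow> 'n set" where
  "Pa D A = A \<union> (\<Union>i\<in>A. pa D i)"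

definition bidir_rel :: "'n set set \<Rightarrow> ('n \<times> 'n) set" where
  "bidir_rel B = {(i, j). {i, j} \<in> B}"

definition bidir_components :: "'n set set \<Rightarrow> 'n set set" where
  "bidir_components B = UNIV // ((bidir_rel B)\<^sup>*)"

definition pos_def :: "real^'n^'n \<Rightarrow> bool" where
  "pos_def S \<longleftrightarrow> transpose S = S \<and> (\<forall>x. x \<noteq> 0 \<longrightarrow> x \<bullet> (S *v x) > 0)"

definition Lambda_reg :: "('n::finite \<times> 'n) set \<Rightarrow> (real^'n^'n) set" where
  "Lambda_reg D = {L. (\<forall>i j. (i, j) \<notin> D \<longrightarrow> L $ i $ j = 0) \<and> invertible (mat 1 - L)}"

definition PD_B :: "'n::finite set set \<Rightarrow> (real^'n^'n) set" where
  "PD_B B = {W. pos_def W \<and> (\<forall>i j. i \<noteq> j \<and> {i, j} \<notin> B \<longrightarrow> W $ i $ j = 0)}"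

definition PD_G :: "('n::finite \<times> 'n) set \<Rightarrow> 'n set set \<Rightarrow> (real^'n^'n) set" where
  "PD_G D B = {transpose (matrix_inv (mat 1 - L)) ** W ** matrix_inv (mat 1 - L) | L W.
                 L \<in> Lambda_reg D \<and> W \<in> PD_B B}"

definition sample_cov :: "nat \<Rightarrow> (nat \<Rightarrow> real^'n) \<Rightarrow> real^'n^'n" where
  "sample_cov n X = (\<chi> i j. (1 / real n) * (\<Sum>s<n. X s $ i * X s $ j))"

definition loglik :: "real^'n^'n \<Rightarrow> real^'n^'n \<Rightarrow> real" where
  "loglik S Sig = - ln (det Sig) - trace (matrix_inv Sig ** S)"

definition max_loglik :: "('n::finite \<times> 'n) set \<Rightarrow> 'n set set \<Rightarrow> real^'n^'n \<Rightarrow> ereal" where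
  "max_loglik D B S = (SUP Sig\<in>PD_G D B. ereal (loglik S Sig))"

end

theory Submission
  imports Defs
begin

text \<open>Write \<open>\<Sigma> = A\<^sup>-\<^sup>T W A\<^sup>-\<^sup>1\<close> with \<open>A = I - \<Lambda>\<close>; then \<open>K = \<Sigma>\<^sup>-\<^sup>1 = A W\<^sup>-\<^sup>1 A\<^sup>T\<close> is positive
  semidefinite, \<open>\<ell>(\<Sigma>) = log det K - tr (K S)\<close> and \<open>det K \<le> p! (tr K)\<^sup>p\<close>. Since \<open>p log t - t/c\<close> is
  bounded above in \<open>t > 0\<close>, the likelihood is bounded as soon as \<open>tr K \<le> c tr (K S)\<close> with \<open>c\<close>
  independent of \<open>(\<Lambda>, W)\<close>. Now \<open>W\<^sup>-\<^sup>1\<close> is block diagonal along the bidirected components \<open>C\<close>,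
  and the \<open>C\<close>-rows of \<open>A\<^sup>T\<close> only involve the coordinates in \<open>Pa(C)\<close>. Given \<open>|Pa(C)|\<close> samples,
  almost surely their \<open>Pa(C)\<close>-coordinates form a basis of \<open>\<real>\<^bsup>Pa(C)\<^esup>\<close>, and writing each unit
  vector in this basis bounds \<open>tr K\<close> by a multiple of \<open>n tr (K S) = \<Sum>\<^sub>s X\<^sub>s\<^sup>T K X\<^sub>s\<close>.\<close>

declare transpose_matrix_vector [simp del]

lemma matrix_inv_right:
  fixes A :: "real^'n::finite^'n"
  assumes "invertible A"
  shows "A ** matrix_inv A = mat 1"
  using someI_ex[OF assms[unfolded invertible_def]] unfolding matrix_inv_def by auto

lemma matrix_inv_left:
  fixes A :: "real^'n::finite^'n"
  assumes "invertible A"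
  shows "matrix_inv A ** A = mat 1"
  using someI_ex[OF assms[unfolded invertible_def]] unfolding matrix_inv_def by auto

lemma matrix_inv_unique:
  fixes A B :: "real^'n::finite^'n"
  assumes "A ** B = mat 1" "B ** A = mat 1"
  shows "matrix_inv A = B"
proof -
  have inv: "invertible A" using assms unfolding invertible_def by auto
  have "matrix_inv A = matrix_inv A ** (A ** B)" using assms by simp
  also have "\<dots> = (matrix_inv A ** A) ** B" by (simp add: matrix_mul_assoc)
  also have "\<dots> = B" using matrix_inv_left[OF inv] by simp
  finally show ?thesis .
qed

lemma invertible_if_pos_def:
  fixes W :: "real^'n::finite^'n"
  assumes "pos_def W"
  shows "invertible W"
proof -
  have "inj ((*v) W)"
  proof (rule injI)
    fix x y assume "W *v x = W *v y"
    then have "W *v (x - y) = 0" by (simp add: matrix_vector_mult_diff_distrib)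
    then show "x = y" using assms unfolding pos_def_def
      by (metis inner_zero_right less_irrefl right_minus_eq)
  qed
  then have "det (matrix ((*v) W)) \<noteq> 0"
    by (subst det_nz_iff_inj) (auto simp: matrix_vector_mul_linear)
  then show ?thesis by (simp add: invertible_det_nz matrix_of_matrix_vector_mul)
qed

lemma symmetric_matrix_inv:
  fixes W :: "real^'n::finite^'n"
  assumes "invertible W" "transpose W = W"
  shows "transpose (matrix_inv W) = matrix_inv W"
proof -
  have "W ** transpose (matrix_inv W) = mat 1"
    using arg_cong[OF matrix_inv_left[OF assms(1)], of transpose] assms(2)
    by (simp add: matrix_transpose_mul)
  moreover have "transpose (matrix_inv W) ** W = mat 1"
    using arg_cong[OF matrix_inv_right[OF assms(1)], of transpose] assms(2)
    by (simp add: matrix_transpose_mul)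
  ultimately show ?thesis using matrix_inv_unique by metis
qed

lemma congruence_mult_inverse:
  fixes A W :: "real^'n::finite^'n"
  assumes A: "invertible A" and W: "invertible W"
  shows "(transpose (matrix_inv A) ** W ** matrix_inv A) ** (A ** matrix_inv W ** transpose A) = mat 1"
    and "(A ** matrix_inv W ** transpose A) ** (transpose (matrix_inv A) ** W ** matrix_inv A) = mat 1"
proof -
  let ?Ai = "matrix_inv A"
  have tA1: "transpose ?Ai ** transpose A = mat 1"
    using arg_cong[OF matrix_inv_right[OF A], of transpose] by (simp add: matrix_transpose_mul)
  have tA2: "transpose A ** transpose ?Ai = mat 1"
    using arg_cong[OF matrix_inv_left[OF A], of transpose] by (simp add: matrix_transpose_mul)
  have "(transpose ?Ai ** W ** ?Ai) ** (A ** matrix_inv W ** transpose A)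
      = transpose ?Ai ** W ** (?Ai ** A) ** matrix_inv W ** transpose A"
    by (simp add: matrix_mul_assoc)
  also have "\<dots> = transpose ?Ai ** (W ** matrix_inv W) ** transpose A"
    using matrix_inv_left[OF A] by (simp add: matrix_mul_assoc)
  finally show "(transpose ?Ai ** W ** ?Ai) ** (A ** matrix_inv W ** transpose A) = mat 1"
    using matrix_inv_right[OF W] tA1 by simp
  have "(A ** matrix_inv W ** transpose A) ** (transpose ?Ai ** W ** ?Ai)
      = A ** matrix_inv W ** (transpose A ** transpose ?Ai) ** W ** ?Ai"
    by (simp add: matrix_mul_assoc)
  also have "\<dots> = A ** (matrix_inv W ** W) ** ?Ai"
    using tA2 by (simp add: matrix_mul_assoc)
  finally show "(A ** matrix_inv W ** transpose A) ** (transpose ?Ai ** W ** ?Ai) = mat 1"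
    using matrix_inv_left[OF W] matrix_inv_right[OF A] by simp
qed

definition quad_form :: "real^'n::finite^'n \<Rightarrow> real^'n \<Rightarrow> real" where
  "quad_form Q u = u \<bullet> (Q *v u)"

lemma quad_form_matrix_inv_nonneg:
  fixes W :: "real^'n::finite^'n"
  assumes "pos_def W"
  shows "quad_form (matrix_inv W) u \<ge> 0"
proof -
  have inv: "invertible W" using invertible_if_pos_def[OF assms] .
  define z where "z = matrix_inv W *v u"
  have u: "u = W *v z"
    unfolding z_def using matrix_inv_right[OF inv] by (simp add: matrix_vector_mul_assoc)
  have "u \<bullet> z = z \<bullet> (W *v z)" unfolding u by (rule inner_commute)
  also have "\<dots> \<ge> 0" using assms unfolding pos_def_def
    by (cases "z = 0") (auto intro: less_imp_le)
  finally show ?thesis by (simp add: z_def quad_form_def)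
qed

lemma quad_form_congruence:
  "quad_form (A ** Q ** transpose A) x = quad_form Q (transpose A *v (x::real^'n::finite))"
proof -
  have "(A ** Q ** transpose A) *v x = A *v (Q *v (transpose A *v x))"
    by (simp add: matrix_vector_mul_assoc matrix_mul_assoc)
  moreover have "x \<bullet> (A *v w) = (transpose A *v x) \<bullet> w" for w
    by (simp add: dot_lmul_matrix transpose_matrix_vector)
  ultimately show ?thesis by (simp add: quad_form_def)
qed

lemma quad_form_add_diff:
  "quad_form Q (x + y) + quad_form Q (x - y) = 2 * quad_form Q x + 2 * quad_form Q y"
  unfolding quad_form_def
  by (simp add: matrix_vector_right_distrib matrix_vector_mult_diff_distrib inner_add_left
      inner_add_right inner_diff_left inner_diff_right)

lemma quad_form_scaleR: "quad_form Q (c *\<^sub>R x) = c\<^sup>2 * quad_form Q x"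
  unfolding quad_form_def by (simp add: power2_eq_square matrix_vector_mult_scaleR)

lemma quad_form_axis: "quad_form K (axis i 1) = K $ i $ i"
  by (simp add: quad_form_def matrix_vector_mult_basis column_def inner_axis')

lemma quad_form_sum_le:
  assumes psd: "\<And>u. quad_form Q u \<ge> 0" and "finite F"
  shows "quad_form Q (\<Sum>j\<in>F. a j) \<le> 2 ^ card F * (\<Sum>j\<in>F. quad_form Q (a j))"
  using assms(2)
proof (induction F rule: finite_induct)
  case empty
  then show ?case by (simp add: quad_form_def)
next
  case (insert x F)
  have "quad_form Q (\<Sum>j\<in>insert x F. a j) \<le> 2 * quad_form Q (a x) + 2 * quad_form Q (\<Sum>j\<in>F. a j)"
    using insert quad_form_add_diff[of Q "a x" "\<Sum>j\<in>F. a j"] psd[of "a x - (\<Sum>j\<in>F. a j)"] by simp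
  also have "\<dots> \<le> 2 * 2 ^ card F * quad_form Q (a x) + 2 * (2 ^ card F * (\<Sum>j\<in>F. quad_form Q (a j)))"
    using insert psd[of "a x"] by (intro add_mono mult_right_mono) auto
  finally show ?case using insert by (simp add: algebra_simps)
qed

lemma trace_eq_sum_quad_form_axis:
  "trace (K::real^'n::finite^'n) = (\<Sum>k\<in>UNIV. quad_form K (axis k 1))"
  by (simp add: trace_def quad_form_axis)

lemma trace_mult_sample_cov:
  "real n * trace ((K::real^'n::finite^'n) ** sample_cov n X) = (\<Sum>s<n. quad_form K (X s))"
proof (cases "n = 0")
  case False
  have "trace (K ** sample_cov n X)
      = (1 / real n) * (\<Sum>i\<in>UNIV. \<Sum>j\<in>UNIV. \<Sum>s<n. X s $ i * (K $ i $ j * X s $ j))"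
    by (simp add: trace_def matrix_matrix_mult_def sample_cov_def sum_distrib_left algebra_simps)
  also have "\<dots> = (1 / real n) * (\<Sum>s<n. \<Sum>i\<in>UNIV. \<Sum>j\<in>UNIV. X s $ i * (K $ i $ j * X s $ j))"
    by (simp add: sum.swap[of _ UNIV "{..<n}"])
  also have "\<dots> = (1 / real n) * (\<Sum>s<n. quad_form K (X s))"
    by (simp add: quad_form_def inner_vec_def matrix_vector_mult_def sum_distrib_left)
  finally show ?thesis using False by simp
qed simp

lemma abs_entry_le_trace:
  fixes K :: "real^'n::finite^'n"
  assumes sym: "transpose K = K" and psd: "\<And>u. quad_form K u \<ge> 0"
  shows "\<bar>K $ i $ j\<bar> \<le> trace K"
proof -
  have diag: "K $ k $ k \<ge> 0" for k
    using psd[of "axis k 1"] by (simp add: quad_form_axis)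
  have tr: "trace K = (\<Sum>k\<in>UNIV. K $ k $ k)" by (simp add: trace_def)
  show ?thesis
  proof (cases "i = j")
    case True
    have "K $ i $ i \<le> (\<Sum>k\<in>UNIV. K $ k $ k)"
      using diag by (intro member_le_sum) auto
    then show ?thesis using True diag[of i] tr by simp
  next
    case False
    have "(\<Sum>k\<in>{i,j}. K $ k $ k) \<le> (\<Sum>k\<in>UNIV. K $ k $ k)"
      using diag by (intro sum_mono2) auto
    then have t: "K $ i $ i + K $ j $ j \<le> trace K" using False tr by simp
    have ji: "K $ j $ i = K $ i $ j" using sym by (metis transpose_def vec_lambda_beta)
    have cross: "axis a 1 \<bullet> (K *v axis b 1) = K $ a $ b" for a b
      by (simp add: matrix_vector_mult_basis column_def inner_axis')
    have "0 \<le> quad_form K (axis i 1 + axis j 1)" "0 \<le> quad_form K (axis i 1 - axis j 1)"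
      using psd by auto
    then have "0 \<le> K $ i $ i + 2 * K $ i $ j + K $ j $ j" "0 \<le> K $ i $ i - 2 * K $ i $ j + K $ j $ j"
      unfolding quad_form_def using ji
      by (simp_all add: matrix_vector_right_distrib matrix_vector_mult_diff_distrib inner_add_left
          inner_add_right inner_diff_left inner_diff_right cross)
    then show ?thesis using t by linarith
  qed
qed

lemma trace_nonneg_if_psd:
  fixes K :: "real^'n::finite^'n"
  assumes "\<And>u. quad_form K u \<ge> 0"
  shows "trace K \<ge> 0"
  using assms[of "axis _ 1"] by (simp add: trace_def quad_form_axis sum_nonneg)

lemma abs_det_le_trace_power:
  fixes K :: "real^'n::finite^'n"
  assumes sym: "transpose K = K" and psd: "\<And>u. quad_form K u \<ge> 0"
  shows "\<bar>det K\<bar> \<le> fact CARD('n) * trace K ^ CARD('n)"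
proof -
  let ?P = "{p. p permutes (UNIV::'n set)}"
  have "\<bar>det K\<bar> \<le> (\<Sum>p\<in>?P. \<bar>of_int (sign p) * (\<Prod>i\<in>UNIV. K $ i $ p i)\<bar>)"
    unfolding det_def by (rule sum_abs)
  also have "\<dots> = (\<Sum>p\<in>?P. \<Prod>i\<in>UNIV. \<bar>K $ i $ p i\<bar>)"
    by (intro sum.cong refl) (simp add: abs_mult abs_prod sign_def)
  also have "\<dots> \<le> (\<Sum>p\<in>?P. \<Prod>i\<in>(UNIV::'n set). trace K)"
    using abs_entry_le_trace[OF sym psd] by (intro sum_mono prod_mono) simp
  also have "\<dots> = fact CARD('n) * trace K ^ CARD('n)"
    by (simp add: card_permutations)
  finally show ?thesis .
qed

lemma linear_ln_minus_le:
  fixes p c t :: real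
  assumes "p > 0" "c > 0" "t > 0"
  shows "p * ln t - t / c \<le> p * ln (p * c) - p"
proof -
  have "ln (t / (p * c)) \<le> t / (p * c) - 1" using assms by (intro ln_le_minus_one) auto
  then have "p * (ln t - ln (p * c)) \<le> p * (t / (p * c) - 1)"
    using assms by (intro mult_left_mono) (auto simp: ln_div)
  then show ?thesis using assms by (simp add: algebra_simps)
qed

lemma ln_det_inverse:
  fixes K Sig :: "real^'n::finite^'n"
  assumes "K ** Sig = mat 1"
  shows "- ln (det Sig) = ln \<bar>det K\<bar>"
proof -
  have ln_abs: "ln \<bar>x\<bar> = ln x" for x :: real
    by (cases "x \<ge> 0") (auto simp: ln_minus)
  have det: "\<bar>det K\<bar> * \<bar>det Sig\<bar> = 1"
    using arg_cong[OF assms, of det] by (simp add: det_mul flip: abs_mult)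
  then have "ln \<bar>det K\<bar> + ln \<bar>det Sig\<bar> = 0"
    using ln_mult[of "\<bar>det K\<bar>" "\<bar>det Sig\<bar>"] by (cases "det K = 0 \<or> det Sig = 0") auto
  then show ?thesis
    using ln_abs[of "det Sig"] by linarith
qed

lemma loglik_le_if_trace_le:
  fixes K Sig S :: "real^'n::finite^'n" and c :: real
  assumes inv: "Sig ** K = mat 1" "K ** Sig = mat 1"
    and sym: "transpose K = K" and psd: "\<And>u. quad_form K u \<ge> 0" and c: "c > 0"
    and tr: "trace K \<le> c * trace (K ** S)"
  shows "loglik S Sig \<le> ln (fact CARD('n)) + CARD('n) * ln (CARD('n) * c) - CARD('n)"
proof -
  let ?p = "real CARD('n)"
  define t where "t = trace K"
  have dK: "det K \<noteq> 0"
    using arg_cong[OF inv(2), of det] by (auto simp: det_mul)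
  have bound: "\<bar>det K\<bar> \<le> fact CARD('n) * t ^ CARD('n)"
    unfolding t_def by (rule abs_det_le_trace_power[OF sym psd])
  have "t \<ge> 0" unfolding t_def by (rule trace_nonneg_if_psd[OF psd])
  moreover have "t \<noteq> 0" using bound dK by (auto simp: zero_power)
  ultimately have t: "t > 0" by simp
  have "ln \<bar>det K\<bar> \<le> ln (fact CARD('n) * t ^ CARD('n))"
    using bound dK by simp
  also have "\<dots> = ln (fact CARD('n)) + ?p * ln t"
    using t by (simp add: ln_mult ln_realpow)
  finally have "ln \<bar>det K\<bar> \<le> ln (fact CARD('n)) + ?p * ln t" .
  moreover have "t / c \<le> trace (K ** S)"
    using tr c unfolding t_def by (simp add: divide_le_eq mult.commute)
  ultimately have "loglik S Sig \<le> ln (fact CARD('n)) + ?p * ln t - t / c"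
    unfolding loglik_def matrix_inv_unique[OF inv] ln_det_inverse[OF inv(2)] by linarith
  also have "\<dots> \<le> ln (fact CARD('n)) + ?p * ln (?p * c) - ?p"
    using linear_ln_minus_le[of ?p c t] c t by simp
  finally show ?thesis .
qed

lemma equiv_bidir_connectivity: "equiv UNIV ((bidir_rel B)\<^sup>*)"
proof -
  have "sym (bidir_rel B)" unfolding bidir_rel_def sym_def by (auto simp: insert_commute)
  then have "sym ((bidir_rel B)\<^sup>*)" by (rule sym_rtrancl)
  then show ?thesis unfolding equiv_def refl_on_def by (auto intro: trans_rtrancl)
qed

lemma finite_bidir_components: "finite (bidir_components (B :: 'n::finite set set))"
  unfolding bidir_components_def by (rule finite_quotient) (simp_all add: equiv_bidir_connectivity)

definition coord_proj :: "'n::finite set \<Rightarrow> real^'n^'n" where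
  "coord_proj C = (\<chi> a b. if a = b \<and> a \<in> C then 1 else 0)"

lemma coord_proj_mult_right: "(A ** coord_proj C) $ a $ b = (if b \<in> C then A $ a $ b else 0)"
  by (simp add: matrix_matrix_mult_def coord_proj_def if_distrib[of "\<lambda>x. _ * x"] sum.If_cases
      Collect_conj_eq cong: if_cong)

lemma coord_proj_mult_left: "(coord_proj C ** A) $ a $ b = (if a \<in> C then A $ a $ b else 0)"
  by (simp add: matrix_matrix_mult_def coord_proj_def if_distrib[of "\<lambda>x. x * _"] sum.If_cases
      Collect_conj_eq cong: if_cong)

lemma coord_proj_mult_vec: "(coord_proj C *v u) $ a = (if a \<in> C then u $ a else 0)"
  by (simp add: matrix_vector_mult_def coord_proj_def if_distrib[of "\<lambda>x. x * _"] sum.If_cases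
      Collect_conj_eq cong: if_cong)

lemma matrix_inv_commute:
  fixes W P :: "real^'n::finite^'n"
  assumes W: "invertible W" and comm: "W ** P = P ** W"
  shows "matrix_inv W ** P = P ** matrix_inv W"
proof -
  have "matrix_inv W ** P = matrix_inv W ** P ** (W ** matrix_inv W)"
    using matrix_inv_right[OF W] by simp
  also have "\<dots> = matrix_inv W ** (W ** P) ** matrix_inv W"
    by (simp add: comm matrix_mul_assoc)
  also have "\<dots> = P ** matrix_inv W"
    using matrix_inv_left[OF W] by (simp add: matrix_mul_assoc)
  finally show ?thesis .
qed

lemma matrix_inv_PD_B_eq_0:
  assumes W: "W \<in> PD_B B" and ij: "(i, j) \<notin> (bidir_rel B)\<^sup>*"
  shows "matrix_inv W $ i $ j = 0"
proof -
  let ?E = "(bidir_rel B)\<^sup>*"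
  define C where "C = ?E `` {j}"
  have eq: "equiv UNIV ?E" by (rule equiv_bidir_connectivity)
  have block: "W $ a $ b = 0" if "(a \<in> C) \<noteq> (b \<in> C)" for a b
  proof -
    have "(a, b) \<notin> ?E"
      using that eq unfolding C_def by (metis Image_singleton_iff equivE symD transD)
    then have "a \<noteq> b" "{a, b} \<notin> B" by (auto simp: bidir_rel_def)
    then show ?thesis using W by (auto simp: PD_B_def)
  qed
  have "W ** coord_proj C = coord_proj C ** W"
    using block by (auto simp: vec_eq_iff coord_proj_mult_right coord_proj_mult_left)
  then have "matrix_inv W ** coord_proj C = coord_proj C ** matrix_inv W"
    using W invertible_if_pos_def by (intro matrix_inv_commute) (auto simp: PD_B_def)
  then have "(matrix_inv W ** coord_proj C) $ i $ j = (coord_proj C ** matrix_inv W) $ i $ j"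
    by simp
  moreover have "j \<in> C" "i \<notin> C"
    using ij eq unfolding C_def by (auto dest: equiv_class_eq_iff)
  ultimately show ?thesis by (simp add: coord_proj_mult_left coord_proj_mult_right)
qed

lemma sum_quotient_both_in:
  assumes eq: "equiv UNIV E" and fin: "finite (UNIV // E)" and ij: "(i, j) \<in> E"
  shows "(\<Sum>C\<in>UNIV // E. of_bool (i \<in> C \<and> j \<in> C)) = (1::real)"
proof -
  have "i \<in> C \<and> j \<in> C \<longleftrightarrow> C = E``{i}" if C_in: "C \<in> UNIV // E" for C
  proof -
    obtain x where C: "C = E``{x}" using C_in by (auto elim!: quotientE)
    have "i \<in> C \<longleftrightarrow> C = E``{i}" unfolding C using equiv_class_eq_iff[OF eq] by auto
    moreover have "j \<in> E``{i}" using ij by simp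
    ultimately show ?thesis by auto
  qed
  then have "(\<Sum>C\<in>UNIV // E. of_bool (i \<in> C \<and> j \<in> C)) = (\<Sum>C\<in>UNIV // E. of_bool (C = E``{i}) :: real)"
    by (intro sum.cong) auto
  also have "\<dots> = 1"
    using fin by (simp add: of_bool_def sum.delta' quotientI)
  finally show ?thesis .
qed

lemma quad_form_matrix_inv_PD_B_split:
  assumes W: "W \<in> PD_B B"
  shows "quad_form (matrix_inv W) u
    = (\<Sum>C\<in>bidir_components B. quad_form (matrix_inv W) (coord_proj C *v u))"
proof -
  let ?Q = "matrix_inv W"
  let ?g = "\<lambda>C i j. (coord_proj C *v u) $ i * (?Q $ i $ j * (coord_proj C *v u) $ j)"
  have entry: "(\<Sum>C\<in>bidir_components B. ?g C i j) = u $ i * (?Q $ i $ j * u $ j)" for i j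
  proof (cases "(i, j) \<in> (bidir_rel B)\<^sup>*")
    case True
    have "?g C i j = of_bool (i \<in> C \<and> j \<in> C) * (u $ i * (?Q $ i $ j * u $ j))" for C
      by (simp add: coord_proj_mult_vec)
    then have "(\<Sum>C\<in>bidir_components B. ?g C i j)
        = (\<Sum>C\<in>bidir_components B. of_bool (i \<in> C \<and> j \<in> C)) * (u $ i * (?Q $ i $ j * u $ j))"
      by (simp only: sum_distrib_right)
    then show ?thesis
      using sum_quotient_both_in[OF equiv_bidir_connectivity _ True] finite_bidir_components
      by (simp add: bidir_components_def)
  next
    case False
    then show ?thesis using matrix_inv_PD_B_eq_0[OF W False] by simp
  qed
  have "(\<Sum>C\<in>bidir_components B. quad_form ?Q (coord_proj C *v u))
      = (\<Sum>C\<in>bidir_components B. \<Sum>i\<in>UNIV. \<Sum>j\<in>UNIV. ?g C i j)"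
    by (simp add: quad_form_def inner_vec_def matrix_vector_mult_def sum_distrib_left)
  also have "\<dots> = (\<Sum>i\<in>UNIV. \<Sum>j\<in>UNIV. \<Sum>C\<in>bidir_components B. ?g C i j)"
    by (subst sum.swap) (intro sum.cong refl sum.swap)
  also have "\<dots> = quad_form ?Q u"
    by (simp only: entry) (simp add: quad_form_def inner_vec_def matrix_vector_mult_def sum_distrib_left)
  finally show ?thesis by simp
qed

lemma coord_proj_transpose_Pa:
  assumes L: "L \<in> Lambda_reg D"
  shows "coord_proj C ** transpose (mat 1 - L) ** coord_proj (Pa D C) = coord_proj C ** transpose (mat 1 - L)"
proof -
  have "(mat 1 - L) $ m $ i = 0" if "i \<in> C" "m \<notin> Pa D C" for i m
  proof -
    have "m \<noteq> i" "(m, i) \<notin> D" using that by (auto simp: Pa_def pa_def)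
    then show ?thesis using L by (simp add: Lambda_reg_def mat_def)
  qed
  then show ?thesis
    by (auto simp: vec_eq_iff coord_proj_mult_right coord_proj_mult_left transpose_def)
qed

text \<open>Its determinant is nonzero iff the \<open>P\<close>-coordinates of the samples \<open>X (f j)\<close>, \<open>j \<in> P\<close>,
  form a basis of \<open>\<real>\<^sup>P\<close>.\<close>
definition sample_matrix :: "'n::finite set \<Rightarrow> ('n \<Rightarrow> nat) \<Rightarrow> (nat \<Rightarrow> real^'n) \<Rightarrow> real^'n^'n" where
  "sample_matrix P f X = (\<chi> j. if j \<in> P then X (f j) else axis j 1)"

lemma det_replace_row:
  fixes G :: "real^'n::finite^'n"
  shows "det (\<chi> i. if i = k then y else G $ i) = (\<chi> l. det (\<chi> i. if i = k then axis l 1 else G $ i)) \<bullet> y"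
proof -
  have "det (\<chi> i. if i = k then y else G $ i)
      = det (\<chi> i. if i = k then (\<Sum>l\<in>UNIV. (y $ l) *s axis l 1) else G $ i)"
    by (simp only: basis_expansion)
  also have "\<dots> = (\<Sum>l\<in>UNIV. det (\<chi> i. if i = k then (y $ l) *s axis l 1 else G $ i))"
    by (rule det_linear_row_sum) simp
  also have "\<dots> = (\<Sum>l\<in>UNIV. y $ l * det (\<chi> i. if i = k then axis l 1 else G $ i))"
    by (simp add: det_row_mul)
  finally show ?thesis by (simp add: inner_vec_def mult.commute)
qed

lemma det_sample_matrix_insert:
  assumes j: "j \<notin> P" and inj: "inj_on f (insert j P)"
  obtains c where "c $ j = det (sample_matrix P f X)"
    and "\<And>y. det (sample_matrix (insert j P) f (X(f j := y))) = c \<bullet> y"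
proof
  let ?G = "sample_matrix P f X"
  have row: "sample_matrix (insert j P) f (X(f j := y)) = (\<chi> k. if k = j then y else ?G $ k)" for y
    using j inj by (auto simp: vec_eq_iff sample_matrix_def inj_on_def)
  show "det (sample_matrix (insert j P) f (X(f j := y)))
      = (\<chi> l. det (\<chi> k. if k = j then axis l 1 else ?G $ k)) \<bullet> y" for y
    unfolding row by (rule det_replace_row)
  have "(\<chi> k. if k = j then axis j 1 else ?G $ k) = ?G"
    using j by (auto simp: vec_eq_iff sample_matrix_def)
  then show "(\<chi> l. det (\<chi> k. if k = j then axis l 1 else ?G $ k)) $ j = det ?G"
    by simp
qed

lemma borel_measurable_det_sample_matrix:
  assumes M: "sets M = sets borel" and "finite I" "f ` P \<subseteq> I"
  shows "(\<lambda>X. det (sample_matrix P f X)) \<in> borel_measurable (PiM I (\<lambda>_. M))"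
proof -
  have entry: "(\<lambda>X. X (f j) $ k) \<in> borel_measurable (PiM I (\<lambda>_. M))" if "j \<in> P" for j k
  proof -
    have "(\<lambda>X. X (f j)) \<in> measurable (PiM I (\<lambda>_. M)) M"
      using that assms by (intro measurable_component_singleton) auto
    then have "(\<lambda>X. X (f j)) \<in> borel_measurable (PiM I (\<lambda>_. M))"
      by (metis measurable_cong_sets[OF refl M])
    then have "(\<lambda>X. X (f j) \<bullet> axis k 1) \<in> borel_measurable (PiM I (\<lambda>_. M))"
      by (intro borel_measurable_inner borel_measurable_const)
    then show ?thesis by (simp add: inner_axis)
  qed
  show ?thesis
    unfolding det_def sample_matrix_def
  proof (intro borel_measurable_sum borel_measurable_times borel_measurable_const borel_measurable_prod)
    fix p i
    show "(\<lambda>X. (\<chi> j. if j \<in> P then X (f j) else axis j 1) $ i $ p i) \<in> borel_measurable (PiM I (\<lambda>_. M))"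
      using entry by (cases "i \<in> P") simp_all
  qed
qed

lemma hyperplane_null_sets:
  fixes c :: "real^'n::finite"
  assumes "c \<noteq> 0" "sets M = sets borel" "absolutely_continuous lborel M"
  shows "{y. c \<bullet> y = 0} \<in> null_sets M"
proof -
  have "negligible {y. c \<bullet> y = 0}" using negligible_hyperplane[of c 0] assms by simp
  then have "{y. c \<bullet> y = 0} \<in> null_sets lebesgue" by (simp add: negligible_iff_null_sets)
  moreover have "{y. c \<bullet> y = 0} \<in> sets borel" by measurable
  ultimately have "{y. c \<bullet> y = 0} \<in> null_sets lborel"
    by (simp add: null_sets_completion_iff)
  then show ?thesis using assms(3) unfolding absolutely_continuous_def by auto
qed

lemma (in product_sigma_finite) AE_PiM_insert_not_in:
  assumes I: "finite I" "i \<notin> I" and A: "A \<in> sets (PiM (insert i I) M)"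
    and sections: "AE x in PiM I M. AE y in M i. x(i := y) \<notin> A"
  shows "AE z in PiM (insert i I) M. z \<notin> A"
proof -
  have section_integral: "(\<integral>\<^sup>+ y. indicator A (x(i := y)) \<partial>M i) = 0"
    if "AE y in M i. x(i := y) \<notin> A" for x
  proof -
    have "(\<integral>\<^sup>+ y. indicator A (x(i := y)) \<partial>M i) = (\<integral>\<^sup>+ y. 0 \<partial>M i)"
      using that by (intro nn_integral_cong_AE) (auto elim!: eventually_mono)
    then show ?thesis by simp
  qed
  have "emeasure (PiM (insert i I) M) A = (\<integral>\<^sup>+ z. indicator A z \<partial>PiM (insert i I) M)"
    using A by simp
  also have "\<dots> = (\<integral>\<^sup>+ x. (\<integral>\<^sup>+ y. indicator A (x(i := y)) \<partial>M i) \<partial>PiM I M)"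
    using I A by (intro product_nn_integral_insert) auto
  also have "\<dots> = (\<integral>\<^sup>+ x. 0 \<partial>PiM I M)"
    using sections by (intro nn_integral_cong_AE) (auto elim!: eventually_mono simp: section_integral)
  finally show ?thesis using A by (intro AE_not_in) auto
qed

lemma AE_det_sample_matrix_insert_nonzero:
  assumes M: "sets M = sets borel" and ac: "absolutely_continuous lborel M"
    and j: "j \<notin> P" and inj: "inj_on f (insert j P)" and d: "det (sample_matrix P f X) \<noteq> 0"
  shows "AE y in M. det (sample_matrix (insert j P) f (X(f j := y))) \<noteq> 0"
proof -
  obtain c where "c $ j = det (sample_matrix P f X)"
    and det: "\<And>y. det (sample_matrix (insert j P) f (X(f j := y))) = c \<bullet> y"
    using det_sample_matrix_insert[OF j inj] by blast
  with d have "c \<noteq> 0" by auto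
  then have "AE y in M. y \<notin> {y. c \<bullet> y = 0}"
    by (intro AE_not_in hyperplane_null_sets M ac)
  then show ?thesis by (auto elim!: eventually_mono simp: det)
qed

lemma AE_det_sample_matrix_nonzero:
  fixes M :: "(real^'n::finite) measure"
  assumes prob: "prob_space M" and M: "sets M = sets borel" and ac: "absolutely_continuous lborel M"
    and "finite P" "inj_on f P" "finite I" "f ` P \<subseteq> I"
  shows "AE X in PiM I (\<lambda>_. M). det (sample_matrix P f X) \<noteq> 0"
  using assms(4-)
proof (induction P arbitrary: I rule: finite_induct)
  case empty
  have "sample_matrix {} f X = mat 1" for X
    by (simp add: sample_matrix_def vec_eq_iff axis_def mat_def)
  then show ?case by simp
next
  case (insert j P)
  interpret product_sigma_finite "\<lambda>_. M"
    by (simp add: product_sigma_finite_def prob prob_space_imp_sigma_finite)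
  define I' where "I' = I - {f j}"
  have inj: "inj_on f P" and fj: "f j \<notin> f ` P"
    using insert.prems(1) insert.hyps(2) by simp_all
  have I: "I = insert (f j) I'" "f j \<notin> I'" "finite I'" "f ` P \<subseteq> I'"
    using insert.prems(2,3) fj unfolding I'_def by (auto simp: image_iff)
  define A where "A = {X \<in> space (PiM I (\<lambda>_. M)). det (sample_matrix (insert j P) f X) = 0}"
  have A_sets: "A \<in> sets (PiM I (\<lambda>_. M))"
    unfolding A_def using borel_measurable_det_sample_matrix[OF M, of I f "insert j P"] insert
    by measurable
  have "AE X in PiM I' (\<lambda>_. M). AE y in M. X(f j := y) \<notin> A"
    using insert.IH[OF inj I(3,4)]
    by eventually_elim
      (auto elim!: eventually_mono simp: A_def
        dest: AE_det_sample_matrix_insert_nonzero[OF M ac insert.hyps(2) insert.prems(1)])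
  then have "AE X in PiM I (\<lambda>_. M). X \<notin> A"
    using A_sets unfolding I(1) by (rule AE_PiM_insert_not_in[OF I(3,2), rotated])
  then show ?case
    using AE_space by eventually_elim (auto simp: A_def)
qed

lemma coord_proj_axis_eq_sample_combination:
  assumes d: "det (sample_matrix P f X) \<noteq> 0"
  shows "coord_proj P *v axis k 1
    = (\<Sum>j\<in>P. (matrix_inv (transpose (sample_matrix P f X)) *v axis k 1) $ j *\<^sub>R (coord_proj P *v X (f j)))"
proof -
  define R where "R = sample_matrix P f X"
  define c where "c = matrix_inv (transpose R) *v axis k 1"
  have "invertible (transpose R)" using d unfolding R_def by (simp add: invertible_det_nz)
  then have "transpose R *v c = axis k 1"
    unfolding c_def using matrix_inv_right[of "transpose R"] by (simp add: matrix_vector_mul_assoc)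
  moreover have "transpose R *v c = (\<Sum>j\<in>UNIV. c $ j *\<^sub>R R $ j)"
    by (simp add: vec_eq_iff matrix_vector_mult_def transpose_def sum_component mult.commute)
  ultimately have "coord_proj P *v axis k 1 = coord_proj P *v (\<Sum>j\<in>UNIV. c $ j *\<^sub>R R $ j)"
    by simp
  also have "\<dots> = (\<Sum>j\<in>UNIV. coord_proj P *v (c $ j *\<^sub>R R $ j))"
    by (simp add: linear_sum[OF matrix_vector_mul_linear] o_def)
  also have "\<dots> = (\<Sum>j\<in>P. coord_proj P *v (c $ j *\<^sub>R R $ j))"
    by (intro sum.mono_neutral_right)
      (auto simp: vec_eq_iff coord_proj_mult_vec R_def sample_matrix_def axis_def matrix_vector_mult_scaleR)
  also have "\<dots> = (\<Sum>j\<in>P. c $ j *\<^sub>R (coord_proj P *v X (f j)))"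
    by (intro sum.cong refl) (simp add: R_def sample_matrix_def matrix_vector_mult_scaleR)
  finally show ?thesis unfolding c_def R_def .
qed

lemma quad_form_le_of_spanning:
  fixes Q T :: "real^'n::finite^'n"
  assumes psd: "\<And>u. quad_form Q u \<ge> 0" and T: "T ** coord_proj P = T"
    and v: "coord_proj P *v v = (\<Sum>j\<in>J. c j *\<^sub>R (coord_proj P *v x j))"
    and J: "finite J" and c: "\<And>j. j \<in> J \<Longrightarrow> (c j)\<^sup>2 \<le> G"
  shows "quad_form Q (T *v v) \<le> 2 ^ card J * G * (\<Sum>j\<in>J. quad_form Q (T *v x j))"
proof -
  have proj: "T *v (coord_proj P *v u) = T *v u" for u
    using T by (simp add: matrix_vector_mul_assoc)
  have "T *v v = (\<Sum>j\<in>J. c j *\<^sub>R (T *v x j))"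
    using arg_cong[OF v, of "(*v) T"]
    by (simp add: proj linear_sum[OF matrix_vector_mul_linear] o_def matrix_vector_mult_scaleR)
  then have "quad_form Q (T *v v) \<le> 2 ^ card J * (\<Sum>j\<in>J. (c j)\<^sup>2 * quad_form Q (T *v x j))"
    using quad_form_sum_le[OF psd J, of "\<lambda>j. c j *\<^sub>R (T *v x j)"] by (simp add: quad_form_scaleR)
  also have "\<dots> \<le> 2 ^ card J * (\<Sum>j\<in>J. G * quad_form Q (T *v x j))"
    using c psd by (intro mult_left_mono sum_mono mult_right_mono) auto
  finally show ?thesis by (simp add: sum_distrib_left mult.assoc)
qed

definition precision :: "real^'n::finite^'n \<Rightarrow> real^'n^'n \<Rightarrow> real^'n^'n" where
  "precision L W = (mat 1 - L) ** matrix_inv W ** transpose (mat 1 - L)"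

lemma PD_G_precision:
  assumes "Sig \<in> PD_G D B"
  obtains L W where "L \<in> Lambda_reg D" "W \<in> PD_B B"
    and "Sig ** precision L W = mat 1" "precision L W ** Sig = mat 1"
proof -
  obtain L W where L: "L \<in> Lambda_reg D" and W: "W \<in> PD_B B"
    and Sig: "Sig = transpose (matrix_inv (mat 1 - L)) ** W ** matrix_inv (mat 1 - L)"
    using assms unfolding PD_G_def by blast
  have "invertible W" using W invertible_if_pos_def by (auto simp: PD_B_def)
  then show thesis
    using that[OF L W] L unfolding Sig precision_def
    by (auto intro: congruence_mult_inverse simp: Lambda_reg_def)
qed

lemma symmetric_precision:
  assumes "W \<in> PD_B B"
  shows "transpose (precision L W) = precision L W"
proof -
  have "invertible W" "transpose W = W"
    using assms invertible_if_pos_def by (auto simp: PD_B_def pos_def_def)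
  then show ?thesis
    unfolding precision_def using symmetric_matrix_inv[of W]
    by (simp add: matrix_transpose_mul matrix_mul_assoc)
qed

lemma quad_form_precision_nonneg:
  assumes "W \<in> PD_B B"
  shows "quad_form (precision L W) u \<ge> 0"
  unfolding precision_def quad_form_congruence
  using assms quad_form_matrix_inv_nonneg by (auto simp: PD_B_def)

lemma trace_mult_sample_cov_nonneg:
  assumes psd: "\<And>u. quad_form K u \<ge> 0"
  shows "0 \<le> trace (K ** sample_cov n X)"
proof (cases "n = 0")
  case False
  have "0 \<le> real n * trace (K ** sample_cov n X)"
    unfolding trace_mult_sample_cov using psd by (simp add: sum_nonneg)
  then show ?thesis using False by (simp add: zero_le_mult_iff)
qed (simp add: sample_cov_def trace_def matrix_matrix_mult_def)

definition spanning_samples ::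
    "('n::finite \<times> 'n) set \<Rightarrow> 'n set set \<Rightarrow> nat \<Rightarrow> ('n set \<Rightarrow> 'n \<Rightarrow> nat) \<Rightarrow> (nat \<Rightarrow> real^'n) \<Rightarrow> bool" where
  "spanning_samples D B n F X \<longleftrightarrow> (\<forall>C\<in>bidir_components B. inj_on (F C) (Pa D C)
      \<and> F C ` Pa D C \<subseteq> {..<n} \<and> det (sample_matrix (Pa D C) (F C) X) \<noteq> 0)"

lemma quad_form_component_axis_le:
  fixes W :: "real^'n::finite^'n"
  assumes L: "L \<in> Lambda_reg D" and W: "W \<in> PD_B B"
    and f: "inj_on f (Pa D C)" "f ` Pa D C \<subseteq> {..<n}" and d: "det (sample_matrix (Pa D C) f X) \<noteq> 0"
    and G: "\<And>j. ((matrix_inv (transpose (sample_matrix (Pa D C) f X)) *v axis k 1) $ j)\<^sup>2 \<le> G"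
  shows "quad_form (matrix_inv W) (coord_proj C *v (transpose (mat 1 - L) *v axis k 1))
     \<le> 2 ^ CARD('n) * G * (\<Sum>s<n. quad_form (matrix_inv W) (coord_proj C *v (transpose (mat 1 - L) *v X s)))"
proof -
  let ?Q = "matrix_inv W"
  define T where "T = coord_proj C ** transpose (mat 1 - L)"
  have T_apply: "coord_proj C *v (transpose (mat 1 - L) *v v) = T *v v" for v
    unfolding T_def by (simp add: matrix_vector_mul_assoc)
  have psd: "quad_form ?Q u \<ge> 0" for u
    using W quad_form_matrix_inv_nonneg by (auto simp: PD_B_def)
  have G0: "G \<ge> 0" using G[of k] by (meson order_trans zero_le_power2)
  have "quad_form ?Q (T *v axis k 1) \<le> 2 ^ card (Pa D C) * G * (\<Sum>j\<in>Pa D C. quad_form ?Q (T *v X (f j)))"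
    using coord_proj_transpose_Pa[OF L] coord_proj_axis_eq_sample_combination[OF d] G
    by (intro quad_form_le_of_spanning[OF psd]) (auto simp: T_def)
  also have "\<dots> = 2 ^ card (Pa D C) * G * (\<Sum>s\<in>f ` Pa D C. quad_form ?Q (T *v X s))"
    by (simp add: sum.reindex[OF f(1)])
  also have "\<dots> \<le> 2 ^ card (Pa D C) * G * (\<Sum>s<n. quad_form ?Q (T *v X s))"
    using f(2) psd G0 by (intro mult_left_mono sum_mono2) auto
  also have "\<dots> \<le> 2 ^ CARD('n) * G * (\<Sum>s<n. quad_form ?Q (T *v X s))"
    using psd G0 card_mono[of UNIV "Pa D C"]
    by (intro mult_right_mono mult_left_mono power_increasing sum_nonneg) auto
  finally show ?thesis by (simp only: T_apply)
qed

lemma trace_precision_le: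
  fixes L W :: "real^'n::finite^'n" and G :: real
  assumes L: "L \<in> Lambda_reg D" and W: "W \<in> PD_B B" and spanning: "spanning_samples D B n F X"
    and G: "\<And>C k j. C \<in> bidir_components B \<Longrightarrow>
      ((matrix_inv (transpose (sample_matrix (Pa D C) (F C) X)) *v axis k 1) $ j)\<^sup>2 \<le> G"
  shows "trace (precision L W) \<le> CARD('n) * 2 ^ CARD('n) * G * (\<Sum>s<n. quad_form (precision L W) (X s))"
proof -
  let ?cs = "bidir_components B"
  let ?q = "\<lambda>C v. quad_form (matrix_inv W) (coord_proj C *v (transpose (mat 1 - L) *v v))"
  have split: "quad_form (precision L W) v = (\<Sum>C\<in>?cs. ?q C v)" for v
    unfolding precision_def quad_form_congruence by (rule quad_form_matrix_inv_PD_B_split[OF W])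
  have "trace (precision L W) = (\<Sum>k\<in>UNIV. \<Sum>C\<in>?cs. ?q C (axis k 1))"
    by (simp add: trace_eq_sum_quad_form_axis split)
  also have "\<dots> \<le> (\<Sum>k\<in>(UNIV::'n set). \<Sum>C\<in>?cs. 2 ^ CARD('n) * G * (\<Sum>s<n. ?q C (X s)))"
  proof (intro sum_mono)
    fix k C assume "C \<in> ?cs"
    then show "?q C (axis k 1) \<le> 2 ^ CARD('n) * G * (\<Sum>s<n. ?q C (X s))"
      using spanning G unfolding spanning_samples_def
      by (intro quad_form_component_axis_le[OF L W, where f = "F C"]) auto
  qed
  also have "\<dots> = CARD('n) * 2 ^ CARD('n) * G * (\<Sum>s<n. \<Sum>C\<in>?cs. ?q C (X s))"
    by (simp add: sum_distrib_left sum.swap[of _ ?cs] mult.assoc)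
  also have "\<dots> = CARD('n) * 2 ^ CARD('n) * G * (\<Sum>s<n. quad_form (precision L W) (X s))"
    by (simp add: split)
  finally show ?thesis .
qed

lemma loglik_PD_G_bounded:
  fixes X :: "nat \<Rightarrow> real^'n::finite"
  assumes spanning: "spanning_samples D B n F X"
  shows "\<exists>b. \<forall>Sig\<in>PD_G D B. loglik (sample_cov n X) Sig \<le> b"
proof -
  let ?coef = "\<lambda>C k j. ((matrix_inv (transpose (sample_matrix (Pa D C) (F C) X)) *v axis k 1) $ j)\<^sup>2"
  define G where "G = (\<Sum>C\<in>bidir_components B. \<Sum>k\<in>UNIV. \<Sum>j\<in>UNIV. ?coef C k j)"
  define c where "c = CARD('n) * 2 ^ CARD('n) * G * n + 1"
  have G: "?coef C k j \<le> G" if "C \<in> bidir_components B" for C k j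
    unfolding G_def using that finite_bidir_components
    by (intro member_le_sum[THEN order_trans[rotated]] sum_nonneg) auto
  have c: "c > 0"
    unfolding c_def G_def by (intro add_nonneg_pos mult_nonneg_nonneg sum_nonneg) auto
  have "loglik (sample_cov n X) Sig \<le> ln (fact CARD('n)) + CARD('n) * ln (CARD('n) * c) - CARD('n)"
    if Sig: "Sig \<in> PD_G D B" for Sig
  proof -
    obtain L W where L: "L \<in> Lambda_reg D" and W: "W \<in> PD_B B"
      and inv: "Sig ** precision L W = mat 1" "precision L W ** Sig = mat 1"
      using PD_G_precision[OF Sig] .
    note psd = quad_form_precision_nonneg[OF W]
    have "trace (precision L W) \<le> CARD('n) * 2 ^ CARD('n) * G * (\<Sum>s<n. quad_form (precision L W) (X s))"
      using G by (intro trace_precision_le[OF L W spanning])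
    also have "\<dots> = (c - 1) * trace (precision L W ** sample_cov n X)"
      by (simp add: c_def trace_mult_sample_cov[symmetric])
    also have "\<dots> \<le> c * trace (precision L W ** sample_cov n X)"
      using trace_mult_sample_cov_nonneg[OF psd] by (simp add: algebra_simps)
    finally show ?thesis
      by (rule loglik_le_if_trace_le[OF inv symmetric_precision[OF W] psd c])
  qed
  then show ?thesis by blast
qed

lemma ex_inj_on_lessThan:
  assumes "finite A" "card A \<le> n"
  shows "\<exists>f. inj_on f A \<and> f ` A \<subseteq> {..<n}"
proof -
  obtain g where "bij_betw g A {0..<card A}"
    using ex_bij_betw_finite_nat[OF assms(1)] by auto
  then have "inj_on g A" "g ` A \<subseteq> {..<n}"
    using assms(2) by (auto simp: bij_betw_def)
  then show ?thesis by blast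
qed

theorem theorem4:
  fixes D :: "('n::finite \<times> 'n) set" and B :: "'n set set"
    and M :: "(real^'n) measure" and n :: nat
  assumes no_loops: "\<forall>i. (i, i) \<notin> D"
    and B_edges: "\<forall>e\<in>B. card e = 2"
    and prob: "prob_space M"
    and borel: "sets M = sets borel"
    and abs_cont: "absolutely_continuous lborel M"
    and n_ge: "n \<ge> Max ((\<lambda>C. card (Pa D C)) ` bidir_components B)"
  shows "AE X in PiM {..<n} (\<lambda>_. M). max_loglik D B (sample_cov n X) < \<infinity>"
proof -
  let ?cs = "bidir_components B"
  have "card (Pa D C) \<le> n" if "C \<in> ?cs" for C
  proof -
    have "card (Pa D C) \<le> Max ((\<lambda>C. card (Pa D C)) ` ?cs)"
      using that finite_bidir_components by (intro Max_ge) auto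
    then show ?thesis using n_ge by linarith
  qed
  then obtain F where F: "\<forall>C\<in>?cs. inj_on (F C) (Pa D C) \<and> F C ` Pa D C \<subseteq> {..<n}"
    using ex_inj_on_lessThan[of "Pa D _" n] by (metis finite)
  have "AE X in PiM {..<n} (\<lambda>_. M). \<forall>C\<in>?cs. det (sample_matrix (Pa D C) (F C) X) \<noteq> 0"
    using F by (intro AE_finite_allI[OF finite_bidir_components]
        AE_det_sample_matrix_nonzero[OF prob borel abs_cont]) auto
  then show ?thesis
  proof (rule eventually_mono)
    fix X assume "\<forall>C\<in>?cs. det (sample_matrix (Pa D C) (F C) X) \<noteq> 0"
    with F have "spanning_samples D B n F X"
      unfolding spanning_samples_def by blast
    then obtain b where "\<forall>Sig\<in>PD_G D B. loglik (sample_cov n X) Sig \<le> b"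
      using loglik_PD_G_bounded by blast
    then have "max_loglik D B (sample_cov n X) \<le> ereal b"
      unfolding max_loglik_def by (intro SUP_least) auto
    then show "max_loglik D B (sample_cov n X) < \<infinity>"
      by (rule le_less_trans) simp
  qed
qed

end
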